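(* For all terms $s,t$ over $\Sigma_{SCL}(A)$ (possibly containing variables), if $\mathrm{EqFSCL}\vdash s=t$ then $\mathbb M_{se}\models s=t$, i.e. $s$ and $t$ have equal interpretations in $\mathbb M_{se}$ under every assignment of elements of the domain of $\mathbb M_{se}$ to the variables.
   Context: Let $A$ be a nonempty set of atoms. The signature $\Sigma_{SCL}(A)$ consists of the constants $\mathsf T,\mathsf F$, each atom $a\in A$ as a constant, unary negation $\neg$, and two binary connectives written $x\land^\circ y$ (left-sequential, short-circuit conjunction) and $x\lor^\circ y$ (left-sequential, short-circuit disjunction). $\mathcal S_A$ denotes the set of closed terms over $\Sigma_{SCL}(A)$. EqFSCL is the following set of equations in variables $x,y,z$: (F1) $\mathsf F=\neg\mathsf T$; (F2) $x\lor^\circ y=\neg(\neg x\land^\circ\neg y)$; (F3) $\neg\neg x=x$; (F4) $\mathsf T\land^\circ x=x$; (F5) $x\lor^\circ\mathsf F=x$; (F6) $\mathsf F\land^\circ x=\mathsf F$; (F7) $(x\land^\circ y)\land^\circ z=x\land^\circ(y\land^\circ z)$; (F8) $\neg x\land^\circ\mathsf F=x\land^\circ\mathsf F$; (F9) $(x\land^\circ\mathsf F)\lor^\circ y=(x\lor^\circ\mathsf T)\land^\circ y$; (F10) $(x\land^\circ y)\lor^\circ(z\land^\circ\mathsf F)=(x\lor^\circ(z\land^\circ\mathsf F))\land^\circ(y\lor^\circ(z\land^\circ\mathsf F))$. $E\vdash s=t$ means $s=t$ is derivable from the equations $E$ in equational logic (reflexivity, symmetry, transitivity, congruence, substitution).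 Evaluation trees: the set $\mathcal T_A$ is defined inductively by $\mathsf T,\mathsf F\in\mathcal T_A$ and $(X\unlhd a\unrhd Y)\in\mathcal T_A$ for $X,Y\in\mathcal T_A$, $a\in A$ (a binary tree with root labelled $a$, left branch $X$, right branch $Y$, leaves labelled $\mathsf T$ or $\mathsf F$). Leaf replacement is defined by $\mathsf T[\mathsf T\mapsto Y,\mathsf F\mapsto Z]=Y$, $\mathsf F[\mathsf T\mapsto Y,\mathsf F\mapsto Z]=Z$, $(X_1\unlhd a\unrhd X_2)[\mathsf T\mapsto Y,\mathsf F\mapsto Z]=X_1[\mathsf T\mapsto Y,\mathsf F\mapsto Z]\unlhd a\unrhd X_2[\mathsf T\mapsto Y,\mathsf F\mapsto Z]$; an omitted replacement is the identity (e.g. $X[\mathsf T\mapsto Y]=X[\mathsf T\mapsto Y,\mathsf F\mapsto\mathsf F]$). The short-circuit evaluation function $se:\mathcal S_A\to\mathcal T_A$ is: $se(\mathsf T)=\mathsf T$, $se(\mathsf F)=\mathsf F$, $se(a)=\mathsf T\unlhd a\unrhd\mathsf F$, $se(\neg P)=se(P)[\mathsf T\mapsto\mathsf F,\mathsf F\mapsto\mathsf T]$, $se(P\land^\circ Q)=se(P)[\mathsf T\mapsto se(Q)]$, $se(P\lor^\circ Q)=se(P)[\mathsf F\mapsto se(Q)]$. The model $\mathbb M_{se}$ is the $\Sigma_{SCL}(A)$-algebra with domain $\{se(P)\mid P\in\mathcal S_A\}$, interpreting $\mathsf T,\mathsf F,a$ as $\mathsf T$, $\mathsf F$, $\mathsf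 T\unlhd a\unrhd\mathsf F$, and $\neg X=X[\mathsf T\mapsto\mathsf F,\mathsf F\mapsto\mathsf T]$, $X\land^\circ Y=X[\mathsf T\mapsto Y]$, $X\lor^\circ Y=X[\mathsf F\mapsto Y]$. (For closed $P$, the interpretation of $P$ in $\mathbb M_{se}$ is $se(P)$.) *)

theory Defs
  imports Main
begin

datatype ('a, 'v) scl_term =
    Var 'v
  | Tc
  | Fc
  | Atom 'a
  | Neg "('a, 'v) scl_term"
  | LAnd "('a, 'v) scl_term" "('a, 'v) scl_term"
  | LOr "('a, 'v) scl_term" "('a, 'v) scl_term"

datatype 'a cterm =
    CT
  | CF
  | CAtom 'a
  | CNeg "'a cterm"
  | CAnd "'a cterm" "'a cterm"
  | COr "'a cterm" "'a cterm"

fun subst :: "('v \<Rightarrow> ('a, 'w) scl_term) \<Rightarrow> ('a, 'v) scl_term \<Rightarrow> ('a, 'w) scl_term" where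
  "subst \<sigma> (Var x) = \<sigma> x"
| "subst \<sigma> Tc = Tc"
| "subst \<sigma> Fc = Fc"
| "subst \<sigma> (Atom a) = Atom a"
| "subst \<sigma> (Neg p) = Neg (subst \<sigma> p)"
| "subst \<sigma> (LAnd p q) = LAnd (subst \<sigma> p) (subst \<sigma> q)"
| "subst \<sigma> (LOr p q) = LOr (subst \<sigma> p) (subst \<sigma> q)"

definition EqFSCL :: "(('a, nat) scl_term \<times> ('a, nat) scl_term) set" where
  "EqFSCL = (let x = Var 0; y = Var 1; z = Var 2 in
    { (Fc, Neg Tc),
      (LOr x y, Neg (LAnd (Neg x) (Neg y))),
      (Neg (Neg x), x),
      (LAnd Tc x, x),
      (LOr x Fc, x),
      (LAnd Fc x, Fc),
      (LAnd (LAnd x y) z, LAnd x (LAnd y z)),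
      (LAnd (Neg x) Fc, LAnd x Fc),
      (LOr (LAnd x Fc) y, LAnd (LOr x Tc) y),
      (LOr (LAnd x y) (LAnd z Fc),
         LAnd (LOr x (LAnd z Fc)) (LOr y (LAnd z Fc))) })"

inductive derivable :: "(('a, nat) scl_term \<times> ('a, nat) scl_term) set
    \<Rightarrow> ('a, 'v) scl_term \<Rightarrow> ('a, 'v) scl_term \<Rightarrow> bool" for E where
  ax: "(l, r) \<in> E \<Longrightarrow> derivable E (subst \<sigma> l) (subst \<sigma> r)"
| refl: "derivable E s s"
| sym: "derivable E s t \<Longrightarrow> derivable E t s"
| trans: "derivable E s t \<Longrightarrow> derivable E t u \<Longrightarrow> derivable E s u"
| cong_neg: "derivable E s t \<Longrightarrow> derivable E (Neg s) (Neg t)"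
| cong_and: "derivable E s1 t1 \<Longrightarrow> derivable E s2 t2 \<Longrightarrow> derivable E (LAnd s1 s2) (LAnd t1 t2)"
| cong_or: "derivable E s1 t1 \<Longrightarrow> derivable E s2 t2 \<Longrightarrow> derivable E (LOr s1 s2) (LOr t1 t2)"
| substitution: "derivable E s t \<Longrightarrow> derivable E (subst \<tau> s) (subst \<tau> t)"

datatype 'a etree = TT | FF | Node "'a etree" 'a "'a etree"

fun repl :: "'a etree \<Rightarrow> 'a etree \<Rightarrow> 'a etree \<Rightarrow> 'a etree" where
  "repl TT Y Z = Y"
| "repl FF Y Z = Z"
| "repl (Node X1 a X2) Y Z = Node (repl X1 Y Z) a (repl X2 Y Z)"

fun se :: "'a cterm \<Rightarrow> 'a etree" where
  "se CT = TT"
| "se CF = FF"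
| "se (CAtom a) = Node TT a FF"
| "se (CNeg P) = repl (se P) FF TT"
| "se (CAnd P Q) = repl (se P) (se Q) FF"
| "se (COr P Q) = repl (se P) TT (se Q)"

definition Mse_dom :: "'a etree set" where
  "Mse_dom = range se"

fun interp :: "('v \<Rightarrow> 'a etree) \<Rightarrow> ('a, 'v) scl_term \<Rightarrow> 'a etree" where
  "interp \<rho> (Var x) = \<rho> x"
| "interp \<rho> Tc = TT"
| "interp \<rho> Fc = FF"
| "interp \<rho> (Atom a) = Node TT a FF"
| "interp \<rho> (Neg p) = repl (interp \<rho> p) FF TT"
| "interp \<rho> (LAnd p q) = repl (interp \<rho> p) (interp \<rho> q) FF"
| "interp \<rho> (LOr p q) = repl (interp \<rho> p) TT (interp \<rho> q)"

definition Mse_models :: "('a, 'v) scl_term \<Rightarrow> ('a, 'v) scl_term \<Rightarrow> bool" where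
  "Mse_models s t \<longleftrightarrow> (\<forall>\<rho>. (\<forall>x. \<rho> x \<in> Mse_dom) \<longrightarrow> interp \<rho> s = interp \<rho> t)"

end

theory Submission
  imports Defs
begin

text \<open>Every connective is interpreted by leaf replacement, which is associative and has
  T \<mapsto> T, F \<mapsto> F as identity; with the absorption law for trees all of whose leaves are F,
  each axiom of EqFSCL becomes an identity of leaf replacements valid for arbitrary trees.
  Hence soundness holds in the algebra of all evaluation trees, a fortiori in M_se.\<close>

lemma repl_repl: "repl (repl X A B) C D = repl X (repl A C D) (repl B C D)"
  by (induction X) auto

lemma repl_TT_FF [simp]: "repl X TT FF = X"
  by (induction X) auto

lemma repl_FF_FF_absorb: "repl (repl X FF FF) Y FF = repl X FF FF"
  by (induction X) auto

lemma interp_subst: "interp \<rho> (subst \<sigma> t) = interp (\<lambda>x. interp \<rho> (\<sigma> x)) t"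
  by (induction t) auto

lemma interp_EqFSCL: "(l, r) \<in> EqFSCL \<Longrightarrow> interp \<rho> l = interp \<rho> r"
  unfolding EqFSCL_def Let_def by (auto simp: repl_repl repl_FF_FF_absorb)

lemma derivable_interp_eq:
  assumes "derivable E s t"
    and "\<And>l r \<rho>. (l, r) \<in> E \<Longrightarrow> interp \<rho> l = interp \<rho> r"
  shows "interp \<rho> s = interp \<rho> t"
  using assms(1)
proof (induction arbitrary: \<rho> rule: derivable.induct)
  case (ax l r \<sigma>)
  then show ?case by (simp add: interp_subst assms(2))
next
  case (substitution s t \<tau>)
  then show ?case by (simp add: interp_subst)
qed simp_all

theorem theorem2p3:
  fixes s t :: "('a, 'v) scl_term"
  assumes "derivable EqFSCL s t"
  shows "Mse_models s t"
  using derivable_interp_eq[OF assms interp_EqFSCL] unfolding Mse_models_def by blast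

end
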